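(* For $t\in(0,1)$ and $n\ge1$, $$r_n=-\frac12+\frac{2n+1+\alpha+\beta+(1-t)x_n'}{2x_n}-\frac{\big(2y_n+\beta-(1-t)x_n+t\big)\big(2n+1+\alpha+\beta-x_n\big)}{2t\,x_n}.$$
   Context: Fix $\alpha>0$, $\beta>0$, and real $A,B$ with $A\ge0$, $A+B\ge0$, not both zero; $\theta$ is the Heaviside step function. For $t\in(0,1)$ let $w(x;t)=x^\alpha(1-x)^\beta(A+B\theta(x-t))$ on $[0,1]$, and let $P_n(x)=P_n(x;t)$ be the monic orthogonal polynomials: $\int_0^1P_iP_jw\,dx=h_i(t)\delta_{ij}$, $h_i>0$. Define $r_n(t)=B\,t^\alpha(1-t)^\beta P_n(t;t)P_{n-1}(t;t)/h_{n-1}$, $x_n(t)=\frac{\beta}{h_n}\int_0^1\frac{P_n(y)^2}{1-y}\,y^\alpha(1-y)^\beta(A+B\theta(y-t))\,dy$, $y_n(t)=\frac{\beta}{h_{n-1}}\int_0^1\frac{P_n(y)P_{n-1}(y)}{1-y}\,y^\alpha(1-y)^\beta(A+B\theta(y-t))\,dy$. A prime denotes $d/dt$. *)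

theory Defs
  imports "HOL-Analysis.Analysis" "HOL-Computational_Algebra.Polynomial"
begin

definition wt :: "real \<Rightarrow> real \<Rightarrow> real \<Rightarrow> real \<Rightarrow> real \<Rightarrow> real \<Rightarrow> real" where
  "wt \<alpha> \<beta> A B t x = x powr \<alpha> * (1 - x) powr \<beta> * (A + B * (if x - t \<ge> 0 then 1 else 0))"

definition is_monic_OP :: "real \<Rightarrow> real \<Rightarrow> real \<Rightarrow> real \<Rightarrow> real \<Rightarrow> nat \<Rightarrow> real poly \<Rightarrow> bool" where
  "is_monic_OP \<alpha> \<beta> A B t n P \<longleftrightarrow>
     degree P = n \<and> lead_coeff P = 1 \<and>
     (\<forall>Q :: real poly. degree Q < n \<longrightarrow>
        integral {0..1} (\<lambda>x. poly P x * poly Q x * wt \<alpha> \<beta> A B t x) = 0)"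

definition OP :: "real \<Rightarrow> real \<Rightarrow> real \<Rightarrow> real \<Rightarrow> nat \<Rightarrow> real \<Rightarrow> real poly" where
  "OP \<alpha> \<beta> A B n t = (THE P. is_monic_OP \<alpha> \<beta> A B t n P)"

definition hn :: "real \<Rightarrow> real \<Rightarrow> real \<Rightarrow> real \<Rightarrow> nat \<Rightarrow> real \<Rightarrow> real" where
  "hn \<alpha> \<beta> A B n t = integral {0..1} (\<lambda>x. (poly (OP \<alpha> \<beta> A B n t) x)\<^sup>2 * wt \<alpha> \<beta> A B t x)"

definition rn :: "real \<Rightarrow> real \<Rightarrow> real \<Rightarrow> real \<Rightarrow> nat \<Rightarrow> real \<Rightarrow> real" where
  "rn \<alpha> \<beta> A B n t = B * t powr \<alpha> * (1 - t) powr \<beta> * poly (OP \<alpha> \<beta> A B n t) t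
      * poly (OP \<alpha> \<beta> A B (n - 1) t) t / hn \<alpha> \<beta> A B (n - 1) t"

definition xn :: "real \<Rightarrow> real \<Rightarrow> real \<Rightarrow> real \<Rightarrow> nat \<Rightarrow> real \<Rightarrow> real" where
  "xn \<alpha> \<beta> A B n t = \<beta> / hn \<alpha> \<beta> A B n t *
     integral {0..1} (\<lambda>y. (poly (OP \<alpha> \<beta> A B n t) y)\<^sup>2 / (1 - y) * wt \<alpha> \<beta> A B t y)"

definition yn :: "real \<Rightarrow> real \<Rightarrow> real \<Rightarrow> real \<Rightarrow> nat \<Rightarrow> real \<Rightarrow> real" where
  "yn \<alpha> \<beta> A B n t = \<beta> / hn \<alpha> \<beta> A B (n - 1) t *
     integral {0..1} (\<lambda>y. poly (OP \<alpha> \<beta> A B n t) y * poly (OP \<alpha> \<beta> A B (n - 1) t) y / (1 - y)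
        * wt \<alpha> \<beta> A B t y)"

end

theory Submission
  imports Defs
begin

text \<open>
  The orthogonal polynomials are identified with the Gram--Schmidt polynomials of the
  linear functional \<open>I\<^sub>t(p) = \<integral> p w(.;t)\<close>, which is positive on polynomials that are
  nonnegative on [0,1].  Both \<open>I\<^sub>t\<close> and \<open>J\<^sub>t(p) = \<integral> p w(.;t)/(1-x)\<close> are expressed through
  moment sequences; integration by parts gives the moment relations
  \<open>\<beta> \<nu>\<^sub>j = (j+\<alpha>+\<beta>+1) \<mu>\<^sub>j + B t\<^sup>j\<^sup>+\<^sup>1 u(t)\<close> (where \<open>u(x) = x\<^sup>\<alpha>(1-x)\<^sup>\<beta>\<close>) and \<open>\<nu>\<^sub>j - \<nu>\<^sub>j\<^sub>+\<^sub>1 = \<mu>\<^sub>j\<close>, and the moments have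
  explicit t-derivatives.  Since the Gram--Schmidt construction is rational in the moments,
  the coefficients of \<open>P\<^sub>n(.;t)\<close> are differentiable in t; differentiating the orthogonality
  relations yields \<open>I\<^sub>t(\<partial>\<^sub>tP\<^sub>n q) = B u(t) P\<^sub>n(t) q(t)\<close> for \<open>deg q < n\<close>.
  Combined with the reproducing property of the kernel polynomial
  \<open>(P\<^sub>n\<^sub>-\<^sub>1(1) P\<^sub>n - P\<^sub>n(1) P\<^sub>n\<^sub>-\<^sub>1)/(x-1)\<close> this computes \<open>x\<^sub>n'\<close>, and the identity follows by
  eliminating all auxiliary quantities in a final field computation.
\<close>

lemma degree_less_if_coeff_zero:
  "degree (E :: real poly) \<le> m \<Longrightarrow> coeff E m = 0 \<Longrightarrow> E = 0 \<or> degree E < m"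
  by (metis le_neq_implies_less leading_coeff_0_iff)

lemma divide_by_x_minus_1: "g = [:-1, 1:] * synthetic_div g 1 + [:poly g (1 :: real):]"
  using synthetic_div_correct'[of 1 g] by simp

lemma synthetic_div_of_const: "degree g = 0 \<Longrightarrow> synthetic_div g c = 0"
  by (metis degree_eq_zeroE synthetic_div_0 synthetic_div_pCons pCons_0_0 poly_0)

lemma x_minus_1_mult: "[:-1, 1:] * f = pCons 0 f - (f :: real poly)"
  by (simp add: mult_pCons_left)

lemma degree_euler_op: "degree (pCons 0 (pderiv p)) \<le> degree (p :: real poly)"
proof (cases "pderiv p = 0")
  case False
  then have "degree p \<noteq> 0" using pderiv_eq_0_iff by blast
  then show ?thesis using degree_pderiv[of p] by simp
qed simp

section \<open>Gram--Schmidt orthogonalisation for a positive functional\<close>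

fun gram_schmidt :: "(real poly \<Rightarrow> real) \<Rightarrow> nat \<Rightarrow> real poly" where
  "gram_schmidt ip n = monom 1 n -
     (\<Sum>k<n. smult (ip (monom 1 n * gram_schmidt ip k) / ip (gram_schmidt ip k * gram_schmidt ip k))
        (gram_schmidt ip k))"

declare gram_schmidt.simps[simp del]

lemma gram_schmidt_monic: "degree (gram_schmidt ip n) = n \<and> coeff (gram_schmidt ip n) n = 1"
proof (induction n rule: less_induct)
  case (less n)
  define S where "S = (\<Sum>k<n. smult (ip (monom 1 n * gram_schmidt ip k)
      / ip (gram_schmidt ip k * gram_schmidt ip k)) (gram_schmidt ip k))"
  have e: "gram_schmidt ip n = monom 1 n - S" unfolding S_def by (subst gram_schmidt.simps) simp
  have cS: "coeff S n = 0"
    unfolding S_def coeff_sum using less by (auto intro!: sum.neutral simp: coeff_eq_0)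
  have dS: "degree S \<le> n" unfolding S_def
    by (rule degree_sum_le) (use less in \<open>auto intro: order.trans[OF degree_smult_le]\<close>)
  have c: "coeff (gram_schmidt ip n) n = 1" using cS by (simp add: e)
  have "degree (gram_schmidt ip n) \<le> n"
    unfolding e by (rule degree_diff_le) (use dS in \<open>auto simp: degree_monom_le\<close>)
  moreover have "degree (gram_schmidt ip n) \<ge> n" using c by (metis le_degree one_neq_zero)
  ultimately show ?case using c by simp
qed

lemma gram_schmidt_0: "gram_schmidt ip 0 = 1"
  by (subst gram_schmidt.simps) simp

lemma gram_schmidt_degree[simp]: "degree (gram_schmidt ip n) = n"
  using gram_schmidt_monic by blast

lemma gram_schmidt_lead: "coeff (gram_schmidt ip n) n = 1"
  using gram_schmidt_monic by blast

lemma gram_schmidt_nonzero: "gram_schmidt ip n \<noteq> 0"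
  using gram_schmidt_lead[of ip n] by auto

locale pos_functional =
  fixes ip :: "real poly \<Rightarrow> real"
  assumes ip_add: "ip (p + q) = ip p + ip q"
    and ip_smult: "ip (smult c p) = c * ip p"
    and ip_pos: "p \<noteq> 0 \<Longrightarrow> (\<And>x. 0 \<le> x \<Longrightarrow> x \<le> 1 \<Longrightarrow> poly p x \<ge> 0) \<Longrightarrow> ip p > 0"
begin

abbreviation OPS :: "nat \<Rightarrow> real poly" where "OPS \<equiv> gram_schmidt ip"

lemma ip_minus: "ip (- p) = - ip p" using ip_smult[of "-1" p] by simp
lemma ip_diff: "ip (p - q) = ip p - ip q" using ip_add[of p "-q"] ip_minus[of q] by simp
lemma ip_0[simp]: "ip 0 = 0" using ip_smult[of 0 0] by simp
lemma ip_sum: "finite S \<Longrightarrow> ip (\<Sum>k\<in>S. f k) = (\<Sum>k\<in>S. ip (f k))"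
  by (induction S rule: finite_induct) (auto simp: ip_add)

lemma ip_square_pos: "p \<noteq> 0 \<Longrightarrow> ip (p * p) > 0"
  by (rule ip_pos) auto

lemma norm_pos: "ip (OPS n * OPS n) > 0"
  by (rule ip_square_pos[OF gram_schmidt_nonzero])

lemma orth: "k < n \<Longrightarrow> ip (OPS n * OPS k) = 0"
proof (induction n arbitrary: k rule: less_induct)
  case (less n)
  define c where "c j = ip (monom 1 n * OPS j) / ip (OPS j * OPS j)" for j
  have e: "OPS n * OPS k = monom 1 n * OPS k - (\<Sum>j<n. smult (c j) (OPS j * OPS k))"
    by (subst gram_schmidt.simps) (simp add: c_def left_diff_distrib sum_distrib_right mult_smult_left)
  have z: "ip (OPS j * OPS k) = 0" if "j < n" "j \<noteq> k" for j
  proof (cases "j < k")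
    case True thus ?thesis using less.IH[of k j] less.prems by (simp add: mult.commute)
  next
    case False thus ?thesis using less.IH[of j k] that by simp
  qed
  have "(\<Sum>j<n. ip (smult (c j) (OPS j * OPS k))) = (\<Sum>j\<in>{k}. ip (smult (c j) (OPS j * OPS k)))"
    by (rule sum.mono_neutral_right) (use less.prems z in \<open>auto simp: ip_smult\<close>)
  also have "\<dots> = ip (monom 1 n * OPS k)" using norm_pos[of k] by (simp add: ip_smult c_def)
  finally show ?case unfolding e by (simp add: ip_diff ip_sum)
qed

text \<open>Since \<open>OPS 0, \<dots>, OPS (n-1)\<close> span the polynomials of degree below n, \<open>OPS n\<close> is
  orthogonal to all of them.\<close>
lemma orth_lower: "degree q < n \<Longrightarrow> ip (OPS n * q) = 0"
proof (induction "degree q" arbitrary: q rule: less_induct)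
  case less
  show ?case
  proof (cases "degree q = 0")
    case True
    then obtain c where "q = smult c (OPS 0)" by (metis degree_eq_zeroE gram_schmidt_0 smult_pCons smult_0_right one_pCons mult.right_neutral)
    then show ?thesis using orth[of 0 n] less.prems by (simp add: ip_smult)
  next
    case False
    define m where "m = degree q"
    define r where "r = q - smult (coeff q m) (OPS m)"
    have "degree r \<le> m" unfolding r_def m_def
      by (rule degree_diff_le) (auto intro: order.trans[OF degree_smult_le])
    moreover have "coeff r m = 0" by (simp add: r_def gram_schmidt_lead)
    ultimately have "r = 0 \<or> degree r < m" by (rule degree_less_if_coeff_zero)
    then have "ip (OPS n * r) = 0" using less m_def by auto
    moreover have "ip (OPS n * OPS m) = 0" using orth less.prems m_def by simp
    moreover have "q = r + smult (coeff q m) (OPS m)" by (simp add: r_def)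
    ultimately show ?thesis by (metis distrib_left ip_add ip_smult mult_smult_right mult_zero_right add_0)
  qed
qed

lemma OPS_unique:
  assumes "degree P = n" "coeff P n = 1" "\<And>Q. degree Q < n \<Longrightarrow> ip (P * Q) = 0"
  shows "P = OPS n"
proof (rule ccontr)
  define D where "D = P - OPS n"
  assume "P \<noteq> OPS n"
  hence D: "D \<noteq> 0" by (simp add: D_def)
  have "degree D \<le> n" unfolding D_def by (rule degree_diff_le) (use assms in auto)
  moreover have "coeff D n = 0" using assms gram_schmidt_lead by (simp add: D_def)
  ultimately have "degree D < n" using D degree_less_if_coeff_zero by blast
  have "ip (P * D) = 0" using assms(3)[OF \<open>degree D < n\<close>] .
  moreover have "ip (OPS n * D) = 0" using orth_lower[OF \<open>degree D < n\<close>] .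
  moreover have "D * D = P * D - OPS n * D" by (simp add: D_def left_diff_distrib)
  ultimately have "ip (D * D) = 0" by (simp add: ip_diff)
  thus False using ip_square_pos[OF D] by simp
qed

text \<open>The orthogonal polynomials do not vanish at the endpoint 1: otherwise \<open>OPS k = (x-1) r\<close>
  with \<open>deg r < k\<close>, and \<open>ip (OPS k r) = - ip ((1-x) r\<^sup>2) < 0\<close>.\<close>
lemma OPS_at_1_nonzero: "poly (OPS k) 1 \<noteq> 0"
proof
  assume z: "poly (OPS k) 1 = 0"
  define r where "r = synthetic_div (OPS k) 1"
  have Qr: "OPS k = [:-1, 1:] * r" using divide_by_x_minus_1[of "OPS k"] z by (simp add: r_def)
  have r0: "r \<noteq> 0" using Qr gram_schmidt_nonzero[of ip k] by auto
  have "degree (OPS k) = 1 + degree r" unfolding Qr using r0 by (subst degree_mult_eq) auto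
  then have "ip (OPS k * r) = 0" by (intro orth_lower) simp
  moreover have "ip (smult (-1) ([:-1, 1:] * (r * r))) > 0"
  proof (rule ip_pos)
    have "[:-1, 1::real:] \<noteq> 0" by simp
    then show "smult (-1) ([:-1, 1:] * (r * r)) \<noteq> 0" using r0
      by (metis mult_eq_0_iff smult_eq_0_iff neg_equal_0_iff_equal one_neq_zero)
  next
    fix x :: real assume "0 \<le> x" "x \<le> 1"
    then have "x * (poly r x * poly r x) \<le> 1 * (poly r x * poly r x)"
      by (intro mult_right_mono) auto
    then show "poly (smult (-1) ([:-1, 1:] * (r * r))) x \<ge> 0" by simp
  qed
  moreover have "OPS k * r = [:-1, 1:] * (r * r)" unfolding Qr by (simp only: mult.assoc)
  ultimately show False by (simp add: ip_smult ip_diff)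
qed

text \<open>The Euler operator acts on \<open>OPS n\<close> like multiplication by n modulo lower degrees.\<close>
lemma euler_op_norm: "ip (pCons 0 (pderiv (OPS n * OPS n))) = 2 * real n * ip (OPS n * OPS n)"
proof -
  define P where "P = OPS n"
  define xP where "xP = pCons 0 (pderiv P)"
  have e: "pCons 0 (pderiv (P * P)) = smult 2 (P * xP)"
    by (subst poly_eq_poly_eq_iff[symmetric]) (auto simp: xP_def pderiv_mult fun_eq_iff algebra_simps)
  define E where "E = xP - smult (real n) P"
  have "degree xP \<le> n" using degree_euler_op[of P] by (simp add: xP_def P_def)
  then have "degree E \<le> n" unfolding E_def
    by (intro degree_diff_le) (auto simp: P_def intro: order.trans[OF degree_smult_le])
  moreover have "coeff xP n = real n"
    by (cases n) (auto simp: xP_def P_def coeff_pderiv gram_schmidt_lead)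
  then have "coeff E n = 0" by (simp add: E_def P_def gram_schmidt_lead)
  ultimately have "E = 0 \<or> degree E < n" by (rule degree_less_if_coeff_zero)
  then have "ip (P * E) = 0" using orth_lower by (auto simp: P_def)
  moreover have "P * xP = P * E + smult (real n) (P * P)" by (simp add: E_def algebra_simps)
  ultimately show ?thesis unfolding P_def[symmetric] e by (simp add: ip_add ip_smult)
qed

text \<open>The kernel polynomial \<open>(P\<^sub>n\<^sub>-\<^sub>1(1) P\<^sub>n - P\<^sub>n(1) P\<^sub>n\<^sub>-\<^sub>1) / (x - 1)\<close>, which by the
  Christoffel--Darboux formula equals \<open>h\<^sub>n\<^sub>-\<^sub>1 K\<^sub>n\<^sub>-\<^sub>1(x,1)\<close>.\<close>
definition kernel_at_1 :: "nat \<Rightarrow> real poly" where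
  "kernel_at_1 n = synthetic_div
     (smult (poly (OPS (n - 1)) 1) (OPS n) - smult (poly (OPS n) 1) (OPS (n - 1))) 1"

lemma kernel_at_1_factor:
  "[:-1, 1:] * kernel_at_1 n = smult (poly (OPS (n - 1)) 1) (OPS n) - smult (poly (OPS n) 1) (OPS (n - 1))"
  using divide_by_x_minus_1[of "smult (poly (OPS (n - 1)) 1) (OPS n) - smult (poly (OPS n) 1) (OPS (n - 1))"]
  by (simp add: kernel_at_1_def)

lemma kernel_at_1_eval:
  "poly (kernel_at_1 n) x * (x - 1) = poly (OPS (n - 1)) 1 * poly (OPS n) x - poly (OPS n) 1 * poly (OPS (n - 1)) x"
  using arg_cong[OF kernel_at_1_factor, of "\<lambda>p. poly p x"] by (simp add: algebra_simps)

lemma kernel_at_1_degree: "degree (kernel_at_1 n) \<le> n - 1"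
proof -
  have "degree (smult (poly (OPS (n - 1)) 1) (OPS n) - smult (poly (OPS n) 1) (OPS (n - 1))) \<le> n"
    by (intro degree_diff_le order.trans[OF degree_smult_le]) auto
  then show ?thesis by (simp add: kernel_at_1_def degree_synthetic_div)
qed

lemma kernel_at_1_eval_pairing:
  assumes "degree g < n"
  shows "ip (kernel_at_1 n * g) = poly g 1 * ip (kernel_at_1 n)"
proof -
  define r where "r = synthetic_div g 1"
  define W where "W = smult (poly (OPS (n - 1)) 1) (OPS n) - smult (poly (OPS n) 1) (OPS (n - 1))"
  have "kernel_at_1 n * g = W * r + smult (poly g 1) (kernel_at_1 n)"
    unfolding W_def kernel_at_1_factor[symmetric]
    by (subst divide_by_x_minus_1[of g]) (simp add: r_def algebra_simps)
  moreover have "ip (OPS n * r) = 0" using assms by (intro orth_lower) (simp add: r_def degree_synthetic_div)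
  moreover have "ip (OPS (n - 1) * r) = 0"
  proof (cases "r = 0")
    case False
    then have "degree g \<noteq> 0" using synthetic_div_of_const r_def by auto
    then show ?thesis using assms by (intro orth_lower) (simp add: r_def degree_synthetic_div)
  qed simp
  moreover have "W * r = smult (poly (OPS (n - 1)) 1) (OPS n * r) - smult (poly (OPS n) 1) (OPS (n - 1) * r)"
    by (simp add: W_def left_diff_distrib mult_smult_left)
  ultimately show ?thesis by (simp only: ip_add ip_diff ip_smult)
qed

lemma kernel_at_1_reproducing:
  assumes n: "n \<ge> 1" and g: "degree g < n"
  shows "ip (kernel_at_1 n * g) = poly g 1 * ip (OPS (n - 1) * OPS (n - 1))"
proof -
  define F where "F = kernel_at_1 n"
  define d where "d = poly (OPS (n - 1)) 1"
  define E where "E = F - smult d (OPS (n - 1))"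
  have "coeff ([:-1, 1:] * F) n = d"
    unfolding F_def kernel_at_1_factor using n by (simp add: d_def gram_schmidt_lead coeff_eq_0)
  moreover have "coeff ([:-1, 1:] * F) n = coeff F (n - 1) - coeff F n"
    unfolding x_minus_1_mult using n by (cases n) auto
  moreover have "coeff F n = 0" using kernel_at_1_degree[of n] n by (intro coeff_eq_0) (auto simp: F_def)
  ultimately have "coeff E (n - 1) = 0" by (simp add: E_def gram_schmidt_lead)
  moreover have "degree E \<le> n - 1" unfolding E_def using kernel_at_1_degree[of n]
    by (intro degree_diff_le order.trans[OF degree_smult_le]) (auto simp: F_def)
  ultimately have "E = 0 \<or> degree E < n - 1" using degree_less_if_coeff_zero by blast
  then have "ip (OPS (n - 1) * E) = 0" using orth_lower by auto
  moreover have "F * OPS (n - 1) = OPS (n - 1) * E + smult d (OPS (n - 1) * OPS (n - 1))"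
    by (simp add: E_def algebra_simps)
  moreover have "ip (F * OPS (n - 1)) = d * ip F"
    using kernel_at_1_eval_pairing[of "OPS (n - 1)" n] n by (simp add: F_def d_def)
  ultimately have "d * ip F = d * ip (OPS (n - 1) * OPS (n - 1))" by (simp add: ip_add ip_smult) metis
  then have "ip F = ip (OPS (n - 1) * OPS (n - 1))" using OPS_at_1_nonzero by (simp add: d_def)
  then show ?thesis using kernel_at_1_eval_pairing[OF g] by (simp add: F_def)
qed

end

section \<open>Linear functionals given by moment sequences\<close>

definition moment_fun :: "(nat \<Rightarrow> real) \<Rightarrow> real poly \<Rightarrow> real" where
  "moment_fun m p = (\<Sum>j\<le>degree p. coeff p j * m j)"

lemma moment_fun_bound: "degree p \<le> N \<Longrightarrow> moment_fun m p = (\<Sum>j\<le>N. coeff p j * m j)"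
  unfolding moment_fun_def by (rule sum.mono_neutral_left) (auto simp: coeff_eq_0)

lemma moment_fun_add: "moment_fun m (p + q) = moment_fun m p + moment_fun m q"
proof -
  define N where "N = max (degree p) (degree q)"
  have "degree (p + q) \<le> N" unfolding N_def by (rule degree_add_le) auto
  then show ?thesis
    using moment_fun_bound[of p N m] moment_fun_bound[of q N m] moment_fun_bound[of "p + q" N m]
    by (simp add: N_def sum.distrib algebra_simps)
qed

lemma moment_fun_smult: "moment_fun m (smult c p) = c * moment_fun m p"
  using moment_fun_bound[of "smult c p" "degree p" m]
  by (simp add: moment_fun_def sum_distrib_left algebra_simps)

lemma moment_fun_diff: "moment_fun m (p - q) = moment_fun m p - moment_fun m q"
  using moment_fun_add[of m p "-q"] moment_fun_smult[of m "-1" q] by simp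

lemma moment_fun_shift: "moment_fun m (pCons 0 p) = moment_fun (\<lambda>j. m (Suc j)) p"
proof -
  have "moment_fun m (pCons 0 p) = (\<Sum>j\<le>Suc (degree p). coeff (pCons 0 p) j * m j)"
    by (rule moment_fun_bound) (simp add: degree_pCons_le)
  also have "\<dots> = (\<Sum>j\<le>degree p. coeff p j * m (Suc j))"
    by (subst sum.atMost_Suc_shift) simp
  finally show ?thesis by (simp add: moment_fun_def)
qed

lemma moment_fun_lincomb:
  "moment_fun (\<lambda>j. a * m1 j + b * m2 j) p = a * moment_fun m1 p + b * moment_fun m2 p"
  by (simp add: moment_fun_def sum.distrib sum_distrib_left algebra_simps)

lemma moment_fun_eval: "moment_fun (\<lambda>j. c * x ^ j) p = c * poly p x"
  by (simp add: moment_fun_def poly_altdef sum_distrib_left algebra_simps)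

lemma moment_fun_euler_op: "moment_fun (\<lambda>j. real j * m j) p = moment_fun m (pCons 0 (pderiv p))"
proof -
  have "moment_fun m (pCons 0 (pderiv p)) = moment_fun (\<lambda>j. m (Suc j)) (pderiv p)"
    by (rule moment_fun_shift)
  also have "\<dots> = (\<Sum>j\<le>degree p. coeff (pderiv p) j * m (Suc j))"
    by (rule moment_fun_bound) (simp add: degree_pderiv)
  also have "\<dots> = (\<Sum>j\<le>degree p. real (Suc j) * coeff p (Suc j) * m (Suc j))"
    by (simp add: coeff_pderiv)
  also have "\<dots> = (\<Sum>j\<le>Suc (degree p). real j * coeff p j * m j)"
    by (subst sum.atMost_Suc_shift) simp
  also have "\<dots> = moment_fun (\<lambda>j. real j * m j) p"
    by (subst moment_fun_bound[of p "Suc (degree p)"]) (auto simp: algebra_simps)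
  finally show ?thesis by simp
qed

section \<open>Coefficientwise derivatives of polynomial families\<close>

definition poly_deriv :: "nat \<Rightarrow> (real \<Rightarrow> real poly) \<Rightarrow> real poly \<Rightarrow> real \<Rightarrow> bool" where
  "poly_deriv N P dP t \<longleftrightarrow> (\<forall>s. degree (P s) \<le> N) \<and> degree dP \<le> N \<and>
     (\<forall>j. ((\<lambda>s. coeff (P s) j) has_real_derivative coeff dP j) (at t))"

lemma poly_deriv_const: "degree p \<le> N \<Longrightarrow> poly_deriv N (\<lambda>s. p) 0 t"
  by (simp add: poly_deriv_def)

lemma poly_deriv_mono: "poly_deriv N P dP t \<Longrightarrow> N \<le> M \<Longrightarrow> poly_deriv M P dP t"
  unfolding poly_deriv_def using order.trans by blast

lemma poly_deriv_add:
  "poly_deriv N P dP t \<Longrightarrow> poly_deriv N Q dQ t \<Longrightarrow> poly_deriv N (\<lambda>s. P s + Q s) (dP + dQ) t"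
  unfolding poly_deriv_def by (auto intro!: derivative_eq_intros degree_add_le)

lemma poly_deriv_diff:
  "poly_deriv N P dP t \<Longrightarrow> poly_deriv N Q dQ t \<Longrightarrow> poly_deriv N (\<lambda>s. P s - Q s) (dP - dQ) t"
  unfolding poly_deriv_def by (auto intro!: derivative_eq_intros degree_diff_le)

lemma poly_deriv_smult:
  assumes "poly_deriv N P dP t" "(f has_real_derivative f') (at t)"
  shows "poly_deriv N (\<lambda>s. smult (f s) (P s)) (smult f' (P t) + smult (f t) dP) t"
  using assms unfolding poly_deriv_def
  by (auto intro!: derivative_eq_intros degree_add_le order.trans[OF degree_smult_le]
      simp: DERIV_continuous)

lemma poly_deriv_mult:
  assumes "poly_deriv N P dP t" "poly_deriv M Q dQ t"
  shows "poly_deriv (N + M) (\<lambda>s. P s * Q s) (dP * Q t + P t * dQ) t"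
  unfolding poly_deriv_def
proof (intro conjI allI)
  fix s show "degree (P s * Q s) \<le> N + M"
    using assms unfolding poly_deriv_def by (meson add_mono degree_mult_le order_trans)
next
  show "degree (dP * Q t + P t * dQ) \<le> N + M"
    using assms unfolding poly_deriv_def
    by (intro degree_add_le; meson add_mono degree_mult_le order_trans)
next
  fix j
  have dp: "\<And>i. ((\<lambda>s. coeff (P s) i) has_real_derivative coeff dP i) (at t)"
   and dq: "\<And>i. ((\<lambda>s. coeff (Q s) i) has_real_derivative coeff dQ i) (at t)"
    using assms unfolding poly_deriv_def by auto
  have "((\<lambda>s. \<Sum>i\<le>j. coeff (P s) i * coeff (Q s) (j - i)) has_real_derivative
      (\<Sum>i\<le>j. coeff dP i * coeff (Q t) (j - i) + coeff (P t) i * coeff dQ (j - i))) (at t)"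
    by (intro DERIV_sum, rule DERIV_cong[OF DERIV_mult[OF dp dq]]) (simp add: algebra_simps)
  then show "((\<lambda>s. coeff (P s * Q s) j) has_real_derivative coeff (dP * Q t + P t * dQ) j) (at t)"
    by (simp add: coeff_mult sum.distrib)
qed

lemma poly_deriv_sum:
  assumes "finite S" "\<And>k. k \<in> S \<Longrightarrow> poly_deriv N (P k) (dP k) t"
  shows "poly_deriv N (\<lambda>s. \<Sum>k\<in>S. P k s) (\<Sum>k\<in>S. dP k) t"
  using assms
proof (induction S rule: finite_induct)
  case empty then show ?case by (simp add: poly_deriv_const)
next
  case (insert x F)
  have "poly_deriv N (\<lambda>s. P x s + (\<Sum>k\<in>F. P k s)) (dP x + (\<Sum>k\<in>F. dP k)) t"
    by (rule poly_deriv_add) (use insert in auto)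
  then show ?case using insert by simp
qed

lemma poly_deriv_monic_degree:
  assumes "poly_deriv N P dP t" "\<And>s. degree (P s) = n \<and> coeff (P s) n = 1" "n \<ge> 1"
  shows "degree dP < n"
proof -
  have "coeff dP j = 0" if j: "j \<ge> n" for j
  proof -
    have "(\<lambda>s. coeff (P s) j) = (\<lambda>s. if j = n then 1 else 0)"
      using j assms(2) by (auto intro!: coeff_eq_0)
    moreover have "((\<lambda>s. coeff (P s) j) has_real_derivative coeff dP j) (at t)"
      using assms(1) by (simp add: poly_deriv_def)
    ultimately show ?thesis using DERIV_unique DERIV_const by metis
  qed
  then have "degree dP \<le> n - 1" by (intro degree_le) auto
  then show ?thesis using assms(3) by simp
qed

lemma poly_deriv_moment_fun:
  assumes "poly_deriv N P dP t" "\<And>j. ((\<lambda>s. m s j) has_real_derivative m' j) (at t)"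
  shows "((\<lambda>s. moment_fun (m s) (P s)) has_real_derivative
           (moment_fun (m t) dP + moment_fun m' (P t))) (at t)"
proof -
  have dp: "\<And>j. ((\<lambda>s. coeff (P s) j) has_real_derivative coeff dP j) (at t)"
    and dg: "\<And>s. degree (P s) \<le> N" "degree dP \<le> N"
    using assms unfolding poly_deriv_def by auto
  have "((\<lambda>s. \<Sum>j\<le>N. coeff (P s) j * m s j) has_real_derivative
      (\<Sum>j\<le>N. coeff dP j * m t j + coeff (P t) j * m' j)) (at t)"
    by (intro DERIV_sum, rule DERIV_cong[OF DERIV_mult[OF dp assms(2)]]) (simp add: algebra_simps)
  moreover have "(\<Sum>j\<le>N. coeff dP j * m t j + coeff (P t) j * m' j)
      = moment_fun (m t) dP + moment_fun m' (P t)"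
    using moment_fun_bound[OF dg(2), of "m t"] moment_fun_bound[OF dg(1)[of t], of m']
    by (simp add: sum.distrib)
  moreover have "\<And>s. moment_fun (m s) (P s) = (\<Sum>j\<le>N. coeff (P s) j * m s j)"
    using moment_fun_bound[OF dg(1)] by blast
  ultimately show ?thesis by simp
qed

section \<open>The Jacobi weight with a jump\<close>

locale jacobi_jump =
  fixes \<alpha> \<beta> A B :: real
  assumes alpha_pos: "\<alpha> > 0" and beta_pos: "\<beta> > 0" and A: "A \<ge> 0" and AB: "A + B \<ge> 0"
    and nz: "\<not> (A = 0 \<and> B = 0)"
begin

definition u :: "real \<Rightarrow> real" where "u x = x powr \<alpha> * (1 - x) powr \<beta>"
definition v :: "real \<Rightarrow> real" where "v x = u x / (1 - x)"

lemma u_continuous: "continuous_on {0..1} u"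
  unfolding u_def by (intro continuous_intros continuous_on_powr') (auto simp: alpha_pos beta_pos)

lemma u_pos: "0 < x \<Longrightarrow> x < 1 \<Longrightarrow> u x > 0"
  by (simp add: u_def)

lemma u_nonneg: "u x \<ge> 0"
  by (simp add: u_def)

lemma u_1: "u 1 = 0" by (simp add: u_def)
lemma u_0: "u 0 = 0" using alpha_pos by (simp add: u_def)

lemma u_deriv:
  assumes "0 < x" "x < 1"
  shows "(u has_real_derivative (\<alpha> / x - \<beta> / (1 - x)) * u x) (at x)"
  unfolding u_def using assms
  by (auto intro!: derivative_eq_intros) (simp add: powr_diff field_simps)

lemma wt_eq_u: "wt \<alpha> \<beta> A B s x = A * u x + (if x \<in> {s..} then B * u x else 0)"
  by (simp add: wt_def u_def algebra_simps)

lemma wt_nonneg: "wt \<alpha> \<beta> A B s x \<ge> 0"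
proof -
  have "0 \<le> (A + B) * u x" using AB u_nonneg[of x] by simp
  then show ?thesis using A u_nonneg[of x] by (auto simp: wt_eq_u algebra_simps)
qed

lemma has_integral_jump:
  fixes g :: "real \<Rightarrow> real"
  assumes i0: "g integrable_on {0..1}" and iS: "g integrable_on {s..1}" and s: "0 \<le> s" "s \<le> 1"
  shows "((\<lambda>x. A * g x + (if x \<in> {s..} then B * g x else 0)) has_integral
      (A * integral {0..1} g + B * integral {s..1} g)) {0..1}"
proof -
  have e: "{s..} \<inter> {0..1} = {s..1::real}" using s by auto
  have "(\<lambda>x. B * g x) integrable_on ({s..} \<inter> {0..1})"
    unfolding e using integrable_cmul[OF iS, of B] by simp
  then have 1: "((\<lambda>x. if x \<in> {s..} then B * g x else 0) has_integral B * integral {s..1} g) {0..1}"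
    using integral_restrict_Int[of "{0..1}" "{s..}" "\<lambda>x. B * g x"]
      integrable_restrict_Int[of "{s..}" "\<lambda>x. B * g x" "{0..1}"] e
    by (metis has_integral_integrable_integral integral_mult_right)
  have 2: "((\<lambda>x. A * g x) has_integral A * integral {0..1} g) {0..1}"
    using has_integral_cmul[OF integrable_integral[OF i0], of A] by simp
  show ?thesis using has_integral_add[OF 2 1] by simp
qed

text \<open>Fundamental theorem of calculus for \<open>x\<^sup>j\<^sup>+\<^sup>1 u(x)\<close>, which vanishes at 1.\<close>
lemma ftc_moment:
  assumes c: "0 \<le> c" "c < 1"
  shows "((\<lambda>x. (real j + 1 + \<alpha>) * (x ^ j * u x) - \<beta> * (x ^ (j+1) * v x)) has_integral
     (- (c ^ (j+1) * u c))) {c..1}"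
proof -
  define F where "F x = x ^ (j+1) * u x" for x
  have cF: "continuous_on {c..1} F"
    unfolding F_def using c by (intro continuous_intros continuous_on_subset[OF u_continuous]) auto
  have dF: "(F has_vector_derivative ((real j + 1 + \<alpha>) * (x ^ j * u x) - \<beta> * (x ^ (j+1) * v x))) (at x)"
    if "x \<in> {c<..<1}" for x
  proof -
    have x: "0 < x" "x < 1" using that c by auto
    have p: "((\<lambda>x. x^(j+1)) has_real_derivative real (j+1) * x^j) (at x)"
      using DERIV_pow[of "j+1" x] by simp
    have "(F has_real_derivative (real (j+1) * x ^ j * u x + x^(j+1) * ((\<alpha> / x - \<beta> / (1 - x)) * u x))) (at x)"
      unfolding F_def using DERIV_mult[OF p u_deriv[OF x]] by (rule DERIV_cong) (simp add: algebra_simps)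
    moreover have "real (j+1) * x ^ j * u x + x^(j+1) * ((\<alpha> / x - \<beta> / (1 - x)) * u x)
        = (real j + 1 + \<alpha>) * (x ^ j * u x) - \<beta> * (x ^ (j+1) * v x)"
      using x by (simp add: v_def field_simps)
    ultimately show ?thesis by (simp add: has_real_derivative_iff_has_vector_derivative)
  qed
  have "F 1 = 0" by (simp add: F_def u_1)
  then show ?thesis using fundamental_theorem_of_calculus_interior[OF _ cF dF] c by (simp add: F_def)
qed

lemma xu_continuous: "continuous_on {0..1} (\<lambda>x. x ^ j * u x)"
  by (intro continuous_intros u_continuous)

lemma xu_integrable: "0 \<le> c \<Longrightarrow> (\<lambda>x. x ^ j * u x) integrable_on {c..1}"
  by (rule integrable_continuous_interval, rule continuous_on_subset[OF xu_continuous]) auto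

lemma xv_split: "x ^ j * v x = x ^ (j+1) * v x + x ^ j * u x"
proof (cases "x = 1")
  case True then show ?thesis by (simp add: v_def u_1)
next
  case False then show ?thesis by (simp add: v_def field_simps)
qed

text \<open>The improper-looking integrand \<open>x\<^sup>j v(x)\<close> is integrable, by \<open>ftc_moment\<close>.\<close>
lemma xv_integrable:
  assumes "0 \<le> c" "c < 1"
  shows "(\<lambda>x. x ^ j * v x) integrable_on {c..1}"
proof -
  have i1: "(\<lambda>x. (real j + 1 + \<alpha>) * (x ^ j * u x) - \<beta> * (x ^ (j+1) * v x)) integrable_on {c..1}"
    using ftc_moment[OF assms] by blast
  have i2: "(\<lambda>x. (real j + 1 + \<alpha>) * (x ^ j * u x)) integrable_on {c..1}"
    using integrable_cmul[OF xu_integrable[of c j], of "real j + 1 + \<alpha>"] assms by simp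
  have "(\<lambda>x. (1/\<beta>) * ((real j + 1 + \<alpha>) * (x ^ j * u x)
      - ((real j + 1 + \<alpha>) * (x ^ j * u x) - \<beta> * (x ^ (j+1) * v x)))) integrable_on {c..1}"
    using integrable_cmul[OF integrable_diff[OF i2 i1], of "1/\<beta>"] by simp
  then have i3: "(\<lambda>x. x ^ (j+1) * v x) integrable_on {c..1}" using beta_pos by simp
  have e: "(\<lambda>x. x ^ j * v x) = (\<lambda>x. x ^ (j+1) * v x + x ^ j * u x)"
    by (rule ext, rule xv_split)
  show ?thesis unfolding e by (rule integrable_add[OF i3 xu_integrable]) (use assms in simp)
qed

lemma xv_integral_split:
  assumes "0 \<le> c" "c < 1"
  shows "integral {c..1} (\<lambda>x. x ^ j * v x)
       = integral {c..1} (\<lambda>x. x ^ (j+1) * v x) + integral {c..1} (\<lambda>x. x ^ j * u x)"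
proof -
  have e: "(\<lambda>x. x ^ j * v x) = (\<lambda>x. x ^ (j+1) * v x + x ^ j * u x)"
    by (rule ext, rule xv_split)
  show ?thesis unfolding e by (rule integral_add[OF xv_integrable[OF assms] xu_integrable[OF assms(1)]])
qed

lemma ibp_tail:
  assumes "0 \<le> c" "c < 1"
  shows "\<beta> * integral {c..1} (\<lambda>x. x ^ j * v x)
     = (real j + \<alpha> + \<beta> + 1) * integral {c..1} (\<lambda>x. x ^ j * u x) + c^(j+1) * u c"
proof -
  define f where "f x = x ^ j * u x" for x
  define g where "g x = x ^ (j+1) * v x" for x
  have fi: "f integrable_on {c..1}" unfolding f_def using xu_integrable[of c j] assms by simp
  have gi: "g integrable_on {c..1}" unfolding g_def using xv_integrable[OF assms, of "j+1"] by simp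
  have "integral {c..1} (\<lambda>x. (real j + 1 + \<alpha>) * f x - \<beta> * g x) = - (c ^ (j+1) * u c)"
    using integral_unique[OF ftc_moment[OF assms, of j]] unfolding f_def g_def .
  also have "integral {c..1} (\<lambda>x. (real j + 1 + \<alpha>) * f x - \<beta> * g x)
      = (real j + 1 + \<alpha>) * integral {c..1} f - \<beta> * integral {c..1} g"
    using integral_diff[OF integrable_on_mult_right[OF fi, of "real j + 1 + \<alpha>"]
        integrable_on_mult_right[OF gi, of \<beta>]]
      integral_mult[OF fi, of "real j + 1 + \<alpha>"] integral_mult[OF gi, of \<beta>]
    by argo
  finally show ?thesis
    using xv_integral_split[OF assms, of j] unfolding f_def[abs_def] g_def[abs_def]
    by (simp add: algebra_simps)
qed

definition mu :: "real \<Rightarrow> nat \<Rightarrow> real" where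
  "mu s j = integral {0..1} (\<lambda>x. x ^ j * wt \<alpha> \<beta> A B s x)"
definition nu :: "real \<Rightarrow> nat \<Rightarrow> real" where
  "nu s j = integral {0..1} (\<lambda>x. x ^ j / (1 - x) * wt \<alpha> \<beta> A B s x)"

lemma mu_has_integral:
  assumes "0 \<le> s" "s \<le> 1"
  shows "((\<lambda>x. x ^ j * wt \<alpha> \<beta> A B s x) has_integral
     (A * integral {0..1} (\<lambda>x. x ^ j * u x) + B * integral {s..1} (\<lambda>x. x ^ j * u x))) {0..1}"
proof -
  have e: "(\<lambda>x. x ^ j * wt \<alpha> \<beta> A B s x)
      = (\<lambda>x. A * (x ^ j * u x) + (if x \<in> {s..} then B * (x ^ j * u x) else 0))"
    by (rule ext) (simp add: wt_eq_u algebra_simps)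
  show ?thesis unfolding e by (rule has_integral_jump) (use assms xu_integrable in auto)
qed

lemma nu_has_integral:
  assumes "0 \<le> s" "s < 1"
  shows "((\<lambda>x. x ^ j / (1 - x) * wt \<alpha> \<beta> A B s x) has_integral
     (A * integral {0..1} (\<lambda>x. x ^ j * v x) + B * integral {s..1} (\<lambda>x. x ^ j * v x))) {0..1}"
proof -
  have e: "(\<lambda>x. x ^ j / (1 - x) * wt \<alpha> \<beta> A B s x)
      = (\<lambda>x. A * (x ^ j * v x) + (if x \<in> {s..} then B * (x ^ j * v x) else 0))"
    by (rule ext) (simp add: wt_eq_u v_def algebra_simps)
  show ?thesis unfolding e by (rule has_integral_jump) (use assms xv_integrable in auto)
qed

lemma mu_eq: "0 \<le> s \<Longrightarrow> s \<le> 1 \<Longrightarrow>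
   mu s j = A * integral {0..1} (\<lambda>x. x ^ j * u x) + B * integral {s..1} (\<lambda>x. x ^ j * u x)"
  unfolding mu_def using mu_has_integral by (rule integral_unique)

lemma nu_eq: "0 \<le> s \<Longrightarrow> s < 1 \<Longrightarrow>
   nu s j = A * integral {0..1} (\<lambda>x. x ^ j * v x) + B * integral {s..1} (\<lambda>x. x ^ j * v x)"
  unfolding nu_def using nu_has_integral by (rule integral_unique)

text \<open>The two moment relations, from integration by parts and from \<open>1 = x + (1 - x)\<close>.\<close>
lemma moment_ibp:
  assumes "0 < s" "s < 1"
  shows "\<beta> * nu s j = (real j + \<alpha> + \<beta> + 1) * mu s j + B * s ^ (j+1) * u s"
proof -
  have "\<beta> * nu s j = A * (\<beta> * integral {0..1} (\<lambda>x. x ^ j * v x))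
      + B * (\<beta> * integral {s..1} (\<lambda>x. x ^ j * v x))"
    using assms by (simp add: nu_eq algebra_simps)
  also have "\<dots> = A * ((real j + \<alpha> + \<beta> + 1) * integral {0..1} (\<lambda>x. x ^ j * u x))
     + B * ((real j + \<alpha> + \<beta> + 1) * integral {s..1} (\<lambda>x. x ^ j * u x) + s^(j+1) * u s)"
    using ibp_tail[of 0 j] ibp_tail[of s j] assms by (simp add: u_0)
  also have "\<dots> = (real j + \<alpha> + \<beta> + 1) * mu s j + B * s ^ (j+1) * u s"
    using assms by (simp add: mu_eq algebra_simps)
  finally show ?thesis .
qed

lemma moment_shift:
  assumes "0 \<le> s" "s < 1"
  shows "nu s j - nu s (j+1) = mu s j"
  using assms xv_integral_split[of 0 j] xv_integral_split[of s j] by (simp add: nu_eq mu_eq algebra_simps)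

text \<open>Only the tail integral depends on s, so the moments have the t-derivatives
  \<open>-B t\<^sup>j u(t)\<close> and \<open>-B t\<^sup>j v(t)\<close>.\<close>
lemma mu_deriv:
  assumes "0 < t" "t < 1"
  shows "((\<lambda>s. mu s j) has_real_derivative (- B * (t ^ j * u t))) (at t)"
proof -
  have d: "((\<lambda>s. integral {s..1} (\<lambda>x. x ^ j * u x)) has_real_derivative - (t ^ j * u t)) (at t)"
    using integral_has_real_derivative'[OF xu_continuous, of t j] assms by (simp add: at_within_Icc_at)
  have "((\<lambda>s. A * integral {0..1} (\<lambda>x. x ^ j * u x) + B * integral {s..1} (\<lambda>x. x ^ j * u x))
      has_real_derivative (- B * (t ^ j * u t))) (at t)"
    by (auto intro!: derivative_eq_intros d)
  then show ?thesis
    by (rule has_field_derivative_transform_within_open[where S="{0<..<1}"])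
      (use assms in \<open>auto simp: mu_eq\<close>)
qed

lemma nu_deriv:
  assumes "0 < t" "t < 1"
  shows "((\<lambda>s. nu s j) has_real_derivative (- B * (t ^ j * v t))) (at t)"
proof -
  define c where "c = t / 2"
  define d where "d = (1 + t) / 2"
  have cd: "0 < c" "c < t" "t < d" "d < 1" using assms by (auto simp: c_def d_def)
  have cv: "continuous_on {c..d} (\<lambda>x. x ^ j * v x)"
    unfolding v_def using cd by (intro continuous_intros continuous_on_subset[OF u_continuous]) auto
  have d1: "((\<lambda>s. integral {s..d} (\<lambda>x. x ^ j * v x)) has_real_derivative - (t ^ j * v t)) (at t)"
    using integral_has_real_derivative'[OF cv, of t] cd by (simp add: at_within_Icc_at)
  have "((\<lambda>s. A * integral {0..1} (\<lambda>x. x ^ j * v x)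
        + B * (integral {s..d} (\<lambda>x. x ^ j * v x) + integral {d..1} (\<lambda>x. x ^ j * v x)))
      has_real_derivative (- B * (t ^ j * v t))) (at t)"
    by (auto intro!: derivative_eq_intros d1)
  then show ?thesis
  proof (rule has_field_derivative_transform_within_open[where S="{c<..<d}"])
    fix s assume s: "s \<in> {c<..<d}"
    have "integral {s..d} (\<lambda>x. x ^ j * v x) + integral {d..1} (\<lambda>x. x ^ j * v x)
        = integral {s..1} (\<lambda>x. x ^ j * v x)"
      using Henstock_Kurzweil_Integration.integral_combine[where a=s and c=d and b=1
          and f="\<lambda>x. x^j * v x"] s cd xv_integrable[of s j] by auto
    then show "A * integral {0..1} (\<lambda>x. x ^ j * v x)
        + B * (integral {s..d} (\<lambda>x. x ^ j * v x) + integral {d..1} (\<lambda>x. x ^ j * v x)) = nu s j"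
      using s cd by (simp add: nu_eq)
  qed (use cd in auto)
qed

definition I :: "real \<Rightarrow> real poly \<Rightarrow> real" where "I s = moment_fun (mu s)"
definition J :: "real \<Rightarrow> real poly \<Rightarrow> real" where "J s = moment_fun (nu s)"

lemma I_has_integral:
  assumes "0 \<le> s" "s \<le> 1"
  shows "((\<lambda>x. poly p x * wt \<alpha> \<beta> A B s x) has_integral I s p) {0..1}"
proof -
  have e: "(\<lambda>x. poly p x * wt \<alpha> \<beta> A B s x)
      = (\<lambda>x. \<Sum>j\<le>degree p. coeff p j * (x ^ j * wt \<alpha> \<beta> A B s x))"
    by (rule ext) (simp only: poly_altdef sum_distrib_right mult.assoc)
  have "((\<lambda>x. \<Sum>j\<le>degree p. coeff p j * (x ^ j * wt \<alpha> \<beta> A B s x)) has_integral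
      (\<Sum>j\<le>degree p. coeff p j * mu s j)) {0..1}"
    by (intro has_integral_sum has_integral_mult_right)
      (use mu_has_integral[OF assms] in \<open>auto simp: mu_eq[OF assms]\<close>)
  then show ?thesis unfolding e I_def moment_fun_def .
qed

lemma J_has_integral:
  assumes "0 \<le> s" "s < 1"
  shows "((\<lambda>x. poly p x / (1 - x) * wt \<alpha> \<beta> A B s x) has_integral J s p) {0..1}"
proof -
  have e: "(\<lambda>x. poly p x / (1 - x) * wt \<alpha> \<beta> A B s x)
      = (\<lambda>x. \<Sum>j\<le>degree p. coeff p j * (x ^ j / (1 - x) * wt \<alpha> \<beta> A B s x))"
  proof
    fix x
    have "poly p x / (1 - x) * wt \<alpha> \<beta> A B s x = poly p x * (wt \<alpha> \<beta> A B s x / (1 - x))" by simp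
    also have "\<dots> = (\<Sum>j\<le>degree p. coeff p j * x ^ j * (wt \<alpha> \<beta> A B s x / (1 - x)))"
      by (simp only: poly_altdef sum_distrib_right)
    finally show "poly p x / (1 - x) * wt \<alpha> \<beta> A B s x
        = (\<Sum>j\<le>degree p. coeff p j * (x ^ j / (1 - x) * wt \<alpha> \<beta> A B s x))" by (simp add: mult.assoc)
  qed
  have "((\<lambda>x. \<Sum>j\<le>degree p. coeff p j * (x ^ j / (1 - x) * wt \<alpha> \<beta> A B s x)) has_integral
      (\<Sum>j\<le>degree p. coeff p j * nu s j)) {0..1}"
    by (intro has_integral_sum has_integral_mult_right)
      (use nu_has_integral[OF assms] in \<open>auto simp: nu_eq[OF assms]\<close>)
  then show ?thesis unfolding e J_def moment_fun_def .
qed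

lemma integral_poly_u_pos:
  assumes "0 \<le> a" "a < b" "b \<le> 1" "p \<noteq> 0" "\<And>x. 0 \<le> x \<Longrightarrow> x \<le> 1 \<Longrightarrow> poly p x \<ge> 0"
  shows "integral {a..b} (\<lambda>x. poly p x * u x) > 0"
proof -
  have c: "continuous_on {a..b} (\<lambda>x. poly p x * u x)"
    by (intro continuous_intros continuous_on_subset[OF u_continuous]) (use assms in auto)
  have nn: "\<And>x. x \<in> {a..b} \<Longrightarrow> poly p x * u x \<ge> 0" using assms u_nonneg by auto
  have "infinite {a<..<b}" using assms by simp
  moreover have "finite {x. poly p x = 0}" using assms(4) poly_roots_finite by blast
  ultimately have "\<not> {a<..<b} \<subseteq> {x. poly p x = 0}" using finite_subset by blast
  then obtain x where "x \<in> {a<..<b}" "poly p x \<noteq> 0" by blast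
  then have x: "a < x" "x < b" "poly p x \<noteq> 0" by auto
  then have "poly p x > 0" using assms(1,3) assms(5)[of x] by linarith
  moreover have "u x > 0" using x assms by (intro u_pos) auto
  ultimately have "poly p x * u x > 0" by simp
  then have "integral {a..b} (\<lambda>x. poly p x * u x) \<noteq> 0"
    using integral_eq_0_iff[OF c assms(2) nn] x by force
  moreover have "integral {a..b} (\<lambda>x. poly p x * u x) \<ge> 0"
    by (rule integral_nonneg[OF integrable_continuous_interval[OF c]]) (use nn in auto)
  ultimately show ?thesis by linarith
qed

text \<open>Positivity of \<open>I\<^sub>s\<close>: split \<open>w(.;s)\<close> as \<open>A u\<close> on \<open>[0,s]\<close> and \<open>(A+B) u\<close> on \<open>[s,1]\<close>.\<close>
lemma I_pos:
  assumes s: "0 < s" "s < 1" and p: "p \<noteq> 0" "\<And>x. 0 \<le> x \<Longrightarrow> x \<le> 1 \<Longrightarrow> poly p x \<ge> 0"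
  shows "I s p > 0"
proof -
  define g where "g x = poly p x * u x" for x
  have cg: "continuous_on {0..1} g" unfolding g_def by (intro continuous_intros u_continuous)
  have i0: "g integrable_on {0..1}" by (rule integrable_continuous_interval[OF cg])
  have iS: "g integrable_on {s..1}"
    by (rule integrable_continuous_interval, rule continuous_on_subset[OF cg]) (use s in auto)
  have e: "(\<lambda>x. poly p x * wt \<alpha> \<beta> A B s x) = (\<lambda>x. A * g x + (if x \<in> {s..} then B * g x else 0))"
    by (rule ext) (simp add: g_def wt_eq_u algebra_simps)
  have "((\<lambda>x. poly p x * wt \<alpha> \<beta> A B s x) has_integral
      (A * integral {0..1} g + B * integral {s..1} g)) {0..1}"
    unfolding e by (rule has_integral_jump[OF i0 iS]) (use s in auto)
  then have "I s p = A * integral {0..1} g + B * integral {s..1} g"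
    using has_integral_unique[OF I_has_integral] s by auto
  also have "integral {0..1} g = integral {0..s} g + integral {s..1} g"
    using Henstock_Kurzweil_Integration.integral_combine[where a=0 and c=s and b=1 and f=g] s i0 by auto
  finally have "I s p = A * integral {0..s} g + (A + B) * integral {s..1} g"
    by (simp add: algebra_simps)
  moreover have "integral {0..s} g > 0" "integral {s..1} g > 0"
    unfolding g_def by (rule integral_poly_u_pos; use s p in auto)+
  moreover have "A > 0 \<or> A + B > 0" using A AB nz by auto
  ultimately show ?thesis using A AB by (smt (verit, best) mult_nonneg_nonneg mult_pos_pos)
qed

lemma I_pos_functional: "0 < s \<Longrightarrow> s < 1 \<Longrightarrow> pos_functional (I s)"
  unfolding pos_functional_def using I_pos[of s] by (auto simp: I_def moment_fun_add moment_fun_smult)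

lemma J_add: "J s (p + q) = J s p + J s q" and J_smult: "J s (smult c p) = c * J s p"
  by (simp_all add: J_def moment_fun_add moment_fun_smult)

lemma J_nonneg:
  assumes s: "0 \<le> s" "s < 1" and p: "\<And>x. 0 \<le> x \<Longrightarrow> x \<le> 1 \<Longrightarrow> poly p x \<ge> 0"
  shows "J s p \<ge> 0"
  using J_has_integral[OF s, of p] by (rule has_integral_nonneg) (use p wt_nonneg in auto)

lemma J_x_minus_1:
  assumes "0 \<le> s" "s < 1"
  shows "J s ([:-1, 1:] * f) = - I s f"
proof -
  have "J s f - J s (pCons 0 f) = I s f"
    unfolding J_def I_def moment_fun_shift
    using moment_fun_lincomb[of 1 "nu s" "-1" "\<lambda>j. nu s (Suc j)" f] moment_shift[OF assms] by simp
  then show ?thesis by (simp add: x_minus_1_mult J_def moment_fun_diff)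
qed

lemma J_ibp:
  assumes s: "0 < s" "s < 1"
  shows "\<beta> * J s p = I s (pCons 0 (pderiv p)) + (\<alpha> + \<beta> + 1) * I s p + B * u s * s * poly p s"
proof -
  have "\<beta> * J s p = moment_fun (\<lambda>j. \<beta> * nu s j) p"
    by (simp add: J_def moment_fun_def sum_distrib_left algebra_simps)
  also have "(\<lambda>j. \<beta> * nu s j)
      = (\<lambda>j. 1 * (real j * mu s j) + (\<alpha> + \<beta> + 1) * mu s j + (B * u s * s) * s ^ j)"
    using moment_ibp[OF s] by (auto simp: algebra_simps)
  also have "moment_fun \<dots> p = moment_fun (\<lambda>j. real j * mu s j) p + (\<alpha> + \<beta> + 1) * moment_fun (mu s) p
      + moment_fun (\<lambda>j. (B * u s * s) * s ^ j) p"
    by (simp add: moment_fun_def sum.distrib sum_distrib_left algebra_simps)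
  finally show ?thesis by (simp add: moment_fun_euler_op moment_fun_eval I_def)
qed

lemma I_deriv:
  assumes "0 < t" "t < 1" "poly_deriv N P dP t"
  shows "((\<lambda>s. I s (P s)) has_real_derivative (I t dP - B * u t * poly (P t) t)) (at t)"
proof -
  have "((\<lambda>s. moment_fun (mu s) (P s)) has_real_derivative
      (moment_fun (mu t) dP + moment_fun (\<lambda>j. (- B * u t) * t ^ j) (P t))) (at t)"
    by (rule poly_deriv_moment_fun[OF assms(3)])
      (use mu_deriv[OF assms(1,2)] in \<open>simp add: algebra_simps\<close>)
  then show ?thesis using moment_fun_eval[of "- B * u t" t "P t"] by (simp add: I_def)
qed

lemma J_deriv:
  assumes "0 < t" "t < 1" "poly_deriv N P dP t"
  shows "((\<lambda>s. J s (P s)) has_real_derivative (J t dP - B * v t * poly (P t) t)) (at t)"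
proof -
  have "((\<lambda>s. moment_fun (nu s) (P s)) has_real_derivative
      (moment_fun (nu t) dP + moment_fun (\<lambda>j. (- B * v t) * t ^ j) (P t))) (at t)"
    by (rule poly_deriv_moment_fun[OF assms(3)])
      (use nu_deriv[OF assms(1,2)] in \<open>simp add: algebra_simps\<close>)
  then show ?thesis using moment_fun_eval[of "- B * v t" t "P t"] by (simp add: J_def)
qed

subsection \<open>The orthogonal polynomials and their t-derivative\<close>

abbreviation P :: "nat \<Rightarrow> real \<Rightarrow> real poly" where "P n s \<equiv> gram_schmidt (I s) n"

lemma OP_eq:
  assumes s: "0 < s" "s < 1"
  shows "OP \<alpha> \<beta> A B k s = P k s"
proof -
  interpret pos_functional "I s" by (rule I_pos_functional) (use s in auto)
  have "integral {0..1} (\<lambda>x. poly p x * poly q x * wt \<alpha> \<beta> A B s x) = I s (p * q)" for p q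
    using integral_unique[OF I_has_integral[of s "p * q"]] s by simp
  then have iff: "is_monic_OP \<alpha> \<beta> A B s k Q
      \<longleftrightarrow> degree Q = k \<and> coeff Q k = 1 \<and> (\<forall>q. degree q < k \<longrightarrow> I s (Q * q) = 0)" for Q
    unfolding is_monic_OP_def by auto
  show ?thesis unfolding OP_def
  proof (rule the_equality)
    show "is_monic_OP \<alpha> \<beta> A B s k (P k s)" unfolding iff using orth_lower gram_schmidt_lead by auto
  next
    fix Q assume "is_monic_OP \<alpha> \<beta> A B s k Q"
    then show "Q = P k s" unfolding iff using OPS_unique by blast
  qed
qed

lemma hn_eq: "0 < s \<Longrightarrow> s < 1 \<Longrightarrow> hn \<alpha> \<beta> A B k s = I s (P k s * P k s)"
  unfolding hn_def OP_eq using integral_unique[OF I_has_integral[of s "P k s * P k s"]]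
  by (simp add: power2_eq_square)

lemma xn_eq: "0 < s \<Longrightarrow> s < 1 \<Longrightarrow> xn \<alpha> \<beta> A B n s = \<beta> / I s (P n s * P n s) * J s (P n s * P n s)"
  unfolding xn_def hn_eq OP_eq using integral_unique[OF J_has_integral[of s "P n s * P n s"]]
  by (simp add: power2_eq_square)

lemma yn_eq: "0 < s \<Longrightarrow> s < 1 \<Longrightarrow>
   yn \<alpha> \<beta> A B n s = \<beta> / I s (P (n-1) s * P (n-1) s) * J s (P n s * P (n-1) s)"
  unfolding yn_def hn_eq OP_eq using integral_unique[OF J_has_integral[of s "P n s * P (n-1) s"]]
  by simp

lemma rn_eq: "0 < s \<Longrightarrow> s < 1 \<Longrightarrow>
   rn \<alpha> \<beta> A B n s = B * u s * poly (P n s) s * poly (P (n-1) s) s / I s (P (n-1) s * P (n-1) s)"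
  unfolding rn_def hn_eq OP_eq u_def by simp

text \<open>The coefficients of \<open>P n s\<close> are differentiable in s: each Gram--Schmidt step is a
  rational expression in values of \<open>I\<^sub>s\<close>, with nonvanishing denominators.\<close>
lemma P_differentiable: "0 < t \<Longrightarrow> t < 1 \<Longrightarrow> \<exists>dP. poly_deriv n (P n) dP t"
proof (induction n rule: less_induct)
  case (less n)
  interpret pos_functional "I t" by (rule I_pos_functional) (use less.prems in auto)
  have "\<forall>k\<in>{..<n}. \<exists>d. poly_deriv k (P k) d t" using less by auto
  then obtain dG where dG: "\<And>k. k < n \<Longrightarrow> poly_deriv k (P k) (dG k) t"
    using bchoice[of "{..<n}"] by (metis lessThan_iff)
  define c where "c k s = I s (monom 1 n * P k s) / I s (P k s * P k s)" for k s
  have "\<exists>c'. ((\<lambda>s. c k s) has_real_derivative c') (at t)" if k: "k < n" for k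
  proof -
    have p1: "poly_deriv (n + k) (\<lambda>s. monom 1 n * P k s) (0 * P k t + monom 1 n * dG k) t"
      by (rule poly_deriv_mult[OF poly_deriv_const dG[OF k]]) (simp add: degree_monom_le)
    have p2: "poly_deriv (k + k) (\<lambda>s. P k s * P k s) (dG k * P k t + P k t * dG k) t"
      by (rule poly_deriv_mult[OF dG[OF k] dG[OF k]])
    show ?thesis using norm_pos[of k] unfolding c_def
      using DERIV_divide[OF I_deriv[OF less.prems p1] I_deriv[OF less.prems p2]] by auto
  qed
  then obtain c' where c': "\<And>k. k < n \<Longrightarrow> ((\<lambda>s. c k s) has_real_derivative c' k) (at t)"
    by metis
  have ps: "poly_deriv n (\<lambda>s. \<Sum>k<n. smult (c k s) (P k s))
     (\<Sum>k<n. smult (c' k) (P k t) + smult (c k t) (dG k)) t"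
    by (rule poly_deriv_sum) (auto intro!: poly_deriv_mono[OF poly_deriv_smult[OF dG c']])
  have "poly_deriv n (\<lambda>s. monom 1 n - (\<Sum>k<n. smult (c k s) (P k s)))
     (0 - (\<Sum>k<n. smult (c' k) (P k t) + smult (c k t) (dG k))) t"
    by (rule poly_deriv_diff[OF poly_deriv_const ps]) (simp add: degree_monom_le)
  moreover have "P n = (\<lambda>s. monom 1 n - (\<Sum>k<n. smult (c k s) (P k s)))"
    by (rule ext, subst gram_schmidt.simps) (simp add: c_def)
  ultimately show ?case by auto
qed

text \<open>Differentiating \<open>I\<^sub>s(P\<^sub>n(.;s) q) = 0\<close> (for fixed q of degree below n) at \<open>s = t\<close>.\<close>
lemma deriv_orthogonality:
  assumes t: "0 < t" "t < 1" and dP: "poly_deriv n (P n) dP t" and q: "degree q < n"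
  shows "I t (dP * q) = B * u t * poly (P n t) t * poly q t"
proof -
  have pq: "poly_deriv (n + degree q) (\<lambda>s. P n s * q) (dP * q + P n t * 0) t"
    by (rule poly_deriv_mult[OF dP poly_deriv_const]) simp
  have d0: "((\<lambda>s. I s (P n s * q)) has_real_derivative 0) (at t)"
  proof (rule has_field_derivative_transform_within_open[OF DERIV_const, where S="{0<..<1}"])
    fix s :: real assume s: "s \<in> {0<..<1}"
    interpret s: pos_functional "I s" by (rule I_pos_functional) (use s in auto)
    show "0 = I s (P n s * q)" using s.orth_lower[OF q] by simp
  qed (use t in auto)
  show ?thesis using DERIV_unique[OF I_deriv[OF t pq] d0] by simp
qed

text \<open>The t-derivative of \<open>x\<^sub>n = \<beta> J\<^sub>t(P\<^sub>n\<^sup>2) / h\<^sub>n\<close>; the contribution \<open>I\<^sub>t(2 P\<^sub>n \<partial>\<^sub>tP\<^sub>n)\<close>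
  to \<open>h\<^sub>n'\<close> vanishes by orthogonality.\<close>
lemma xn_has_derivative:
  assumes t: "0 < t" "t < 1" and dP: "poly_deriv n (P n) dP t" and n: "n \<ge> 1"
  shows "(xn \<alpha> \<beta> A B n has_real_derivative
      \<beta> * (B * u t) * (poly (P n t) t)^2 / (I t (P n t * P n t))^2 * J t (P n t * P n t)
      + \<beta> / I t (P n t * P n t) * (2 * J t (P n t * dP) - B * v t * (poly (P n t) t)^2)) (at t)"
    (is "(_ has_real_derivative ?X') _")
proof -
  interpret pos_functional "I t" by (rule I_pos_functional) (use t in auto)
  have "degree dP < n" by (rule poly_deriv_monic_degree[OF dP gram_schmidt_monic n])
  then have "I t (P n t * dP) = 0" by (rule orth_lower)
  then have orth: "I t (dP * P n t + P n t * dP) = 0" by (subst ip_add) (simp add: mult.commute)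
  have PP: "poly_deriv (n + n) (\<lambda>s. P n s * P n s) (dP * P n t + P n t * dP) t"
    by (rule poly_deriv_mult[OF dP dP])
  have dh: "((\<lambda>s. I s (P n s * P n s)) has_real_derivative - B * u t * (poly (P n t) t)^2) (at t)"
    using I_deriv[OF t PP] orth by (simp add: power2_eq_square)
  have JPP: "J t (dP * P n t + P n t * dP) = 2 * J t (P n t * dP)"
    by (subst J_add) (simp add: mult.commute)
  have dJ: "((\<lambda>s. J s (P n s * P n s)) has_real_derivative
      2 * J t (P n t * dP) - B * v t * (poly (P n t) t)^2) (at t)"
    using J_deriv[OF t PP] unfolding JPP power2_eq_square by simp
  have "((\<lambda>s. \<beta> / I s (P n s * P n s) * J s (P n s * P n s)) has_real_derivative ?X') (at t)"
    using DERIV_mult[OF DERIV_divide[OF DERIV_const[of \<beta>] dh norm_pos[of n, THEN less_imp_neq, symmetric]] dJ]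
    by (rule DERIV_cong) (simp add: power2_eq_square algebra_simps)
  then show ?thesis
    by (rule has_field_derivative_transform_within_open[where S="{0<..<1}"])
      (use t xn_eq in auto)
qed

lemma J_square_pos:
  assumes t: "0 < t" "t < 1" and p: "p \<noteq> 0"
  shows "J t (p * p) > 0"
proof -
  interpret pos_functional "I t" by (rule I_pos_functional) (use t in auto)
  have "J t (p * p) = I t (p * p) + J t (pCons 0 (p * p))"
    using J_x_minus_1[of t "p * p"] t by (simp add: x_minus_1_mult J_def moment_fun_diff)
  moreover have "J t (pCons 0 (p * p)) \<ge> 0" by (rule J_nonneg) (use t in auto)
  ultimately show ?thesis using ip_square_pos[OF p] by linarith
qed

text \<open>\<open>J\<^sub>t(P\<^sub>n g) = g(1) J\<^sub>t(P\<^sub>n)\<close> for \<open>deg g \<le> n\<close>: write \<open>g = (x-1) r + g(1)\<close>, then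
  \<open>J\<^sub>t(P\<^sub>n (x-1) r) = -I\<^sub>t(P\<^sub>n r) = 0\<close>.\<close>
lemma J_mult_P:
  assumes t: "0 < t" "t < 1" and g: "degree g \<le> n" and n: "n \<ge> 1"
  shows "J t (P n t * g) = poly g 1 * J t (P n t)"
proof -
  interpret pos_functional "I t" by (rule I_pos_functional) (use t in auto)
  define r where "r = synthetic_div g 1"
  have "degree r < n" using g n by (simp add: r_def degree_synthetic_div)
  then have "I t (P n t * r) = 0" by (rule orth_lower)
  moreover have "P n t * g = [:-1, 1:] * (P n t * r) + smult (poly g 1) (P n t)"
    by (subst divide_by_x_minus_1[of g]) (simp add: r_def algebra_simps)
  ultimately show ?thesis using J_x_minus_1[of t "P n t * r"] t by (simp add: J_add J_smult)
qed

text \<open>\<open>\<partial>\<^sub>tP\<^sub>n(1)\<close> via the reproducing kernel: pair \<open>\<partial>\<^sub>tP\<^sub>n\<close> with the kernel polynomial.\<close>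
lemma deriv_at_1:
  assumes t: "0 < t" "t < 1" and dP: "poly_deriv n (P n) dP t" and n: "n \<ge> 1"
  shows "I t (P (n - 1) t * P (n - 1) t) * poly dP 1
       = B * u t * poly (P n t) t * poly (pos_functional.kernel_at_1 (I t) n) t"
proof -
  interpret pos_functional "I t" by (rule I_pos_functional) (use t in auto)
  have "degree dP < n" by (rule poly_deriv_monic_degree[OF dP gram_schmidt_monic n])
  then have "I t (kernel_at_1 n * dP) = poly dP 1 * I t (P (n - 1) t * P (n - 1) t)"
    by (rule kernel_at_1_reproducing[OF n])
  moreover have "I t (dP * kernel_at_1 n) = B * u t * poly (P n t) t * poly (kernel_at_1 n) t"
    using kernel_at_1_degree[of n] n by (intro deriv_orthogonality[OF t dP]) auto
  ultimately show ?thesis by (simp add: mult.commute)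
qed

lemma J_norm_ibp:
  assumes t: "0 < t" "t < 1"
  shows "\<beta> * J t (P n t * P n t)
    = (2 * real n + 1 + \<alpha> + \<beta>) * I t (P n t * P n t) + B * u t * t * (poly (P n t) t)^2"
proof -
  interpret pos_functional "I t" by (rule I_pos_functional) (use t in auto)
  show ?thesis using J_ibp[OF t, of "P n t * P n t"] euler_op_norm[of n]
    by (simp add: power2_eq_square algebra_simps)
qed

end

text \<open>The identity is a consequence of the following relations between
  \<open>a = P\<^sub>n(t), b = P\<^sub>n\<^sub>-\<^sub>1(t), c = P\<^sub>n(1), d = P\<^sub>n\<^sub>-\<^sub>1(1), K = J\<^sub>t(P\<^sub>n), h = h\<^sub>n, h1 = h\<^sub>n\<^sub>-\<^sub>1\<close>,
  \<open>D = B u(t)\<close>, \<open>S = 2n+1+\<alpha>+\<beta>\<close> and the kernel polynomial value F at t.\<close>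
lemma final_elimination:
  fixes \<beta> a b c d K h h1 D t S F X Y r X' :: real
  assumes t: "0 < t" "t < 1" and h: "h > 0" "h1 > 0" and beta_pos: "\<beta> > 0" and cK: "c * K > 0"
    and ibp: "\<beta> * (c * K) = S * h + D * t * a^2"
    and F: "F * (t - 1) = d * a - c * b"
    and X: "X = \<beta> / h * (c * K)" and Y: "Y = \<beta> / h1 * (d * K)" and r: "r = D * a * b / h1"
    and X': "X' = \<beta> * D * a^2 / h^2 * (c * K) + \<beta> / h * (2 * ((D * a * F / h1) * K) - D / (1 - t) * a^2)"
  shows "r = - 1 / 2 + (S + (1 - t) * X') / (2 * X)
      - (2 * Y + \<beta> - (1 - t) * X + t) * (S - X) / (2 * t * X)"
proof -
  have X0: "X \<noteq> 0" using cK h beta_pos by (auto simp: X)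
  have t1: "t - 1 \<noteq> 0" "1 - t \<noteq> 0" "t \<noteq> 0" using t by auto
  define Z where "Z = D * a^2 / h"
  have SX: "S = X - t * Z" using ibp h unfolding X Z_def by (simp add: field_simps)
  have "(t - 1) * X' = (t - 1) * Z * X + 2 * \<beta> * D * a * K * (F * (t - 1)) / (h * h1) + \<beta> * Z"
    unfolding X' Z_def X using h t1 by (simp add: field_simps power2_eq_square)
  also have "\<dots> = (t - 1) * Z * X + 2 * (Z * Y - r * X) + \<beta> * Z"
    unfolding F Z_def X Y r using h by (simp add: field_simps power2_eq_square)
  finally have e: "(1 - t) * X' = - ((t - 1) * Z * X + 2 * (Z * Y - r * X) + \<beta> * Z)"
    by (simp add: algebra_simps)
  show ?thesis unfolding SX e using X0 t1 by (simp add: field_simps)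
qed

context jacobi_jump
begin

lemma rn_identity:
  assumes t: "0 < t" "t < 1" and dP: "poly_deriv n (P n) dP t" and n: "n \<ge> 1"
  defines "X' \<equiv> \<beta> * (B * u t) * (poly (P n t) t)^2 / (I t (P n t * P n t))^2 * J t (P n t * P n t)
      + \<beta> / I t (P n t * P n t) * (2 * J t (P n t * dP) - B * v t * (poly (P n t) t)^2)"
  shows "rn \<alpha> \<beta> A B n t =
      - 1 / 2 + (2 * real n + 1 + \<alpha> + \<beta> + (1 - t) * X') / (2 * xn \<alpha> \<beta> A B n t)
      - (2 * yn \<alpha> \<beta> A B n t + \<beta> - (1 - t) * xn \<alpha> \<beta> A B n t + t)
        * (2 * real n + 1 + \<alpha> + \<beta> - xn \<alpha> \<beta> A B n t) / (2 * t * xn \<alpha> \<beta> A B n t)"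
proof -
  interpret pos_functional "I t" by (rule I_pos_functional) (use t in auto)
  define F where "F = poly (kernel_at_1 n) t"
  have dP1: "poly dP 1 = B * u t * poly (P n t) t * F / I t (P (n - 1) t * P (n - 1) t)"
    using deriv_at_1[OF t dP n] norm_pos[of "n - 1"] by (simp add: F_def field_simps)
  have JP: "J t (P n t * P n t) = poly (P n t) 1 * J t (P n t)"
    and JQ: "J t (P n t * P (n - 1) t) = poly (P (n - 1) t) 1 * J t (P n t)"
    and JdP: "J t (P n t * dP) = poly dP 1 * J t (P n t)"
    using J_mult_P[OF t _ n] poly_deriv_monic_degree[OF dP gram_schmidt_monic n] by auto
  have v: "B * v t = B * u t / (1 - t)" by (simp add: v_def)
  show ?thesis
  proof (rule final_elimination[OF t norm_pos[of n] norm_pos[of "n - 1"] beta_pos])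
    show "0 < poly (P n t) 1 * J t (P n t)" using J_square_pos[OF t gram_schmidt_nonzero[of "I t" n]] JP by simp
    show "\<beta> * (poly (P n t) 1 * J t (P n t))
        = (2 * real n + 1 + \<alpha> + \<beta>) * I t (P n t * P n t) + B * u t * t * (poly (P n t) t)^2"
      using J_norm_ibp[OF t, of n] JP by simp
    show "F * (t - 1) = poly (P (n - 1) t) 1 * poly (P n t) t - poly (P n t) 1 * poly (P (n - 1) t) t"
      unfolding F_def by (rule kernel_at_1_eval)
  qed (use xn_eq[OF t] yn_eq[OF t] rn_eq[OF t] JP JQ in \<open>simp_all add: X'_def JdP dP1 v\<close>)
qed

end

theorem lemma4p2:
  fixes \<alpha> \<beta> A B t :: real and n :: nat
  assumes "\<alpha> > 0" "\<beta> > 0" "A \<ge> 0" "A + B \<ge> 0" "\<not> (A = 0 \<and> B = 0)"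
    and "0 < t" "t < 1" and "n \<ge> 1"
  shows "(xn \<alpha> \<beta> A B n has_real_derivative deriv (xn \<alpha> \<beta> A B n) t) (at t) \<and>
    rn \<alpha> \<beta> A B n t =
      - 1 / 2 + (2 * real n + 1 + \<alpha> + \<beta> + (1 - t) * deriv (xn \<alpha> \<beta> A B n) t) / (2 * xn \<alpha> \<beta> A B n t)
      - (2 * yn \<alpha> \<beta> A B n t + \<beta> - (1 - t) * xn \<alpha> \<beta> A B n t + t)
        * (2 * real n + 1 + \<alpha> + \<beta> - xn \<alpha> \<beta> A B n t) / (2 * t * xn \<alpha> \<beta> A B n t)"
proof -
  interpret jacobi_jump \<alpha> \<beta> A B by unfold_locales (use assms in auto)
  have t: "0 < t" "t < 1" and n: "n \<ge> 1" using assms by auto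
  obtain dP where dP: "poly_deriv n (P n) dP t" using P_differentiable[OF t] by blast
  note xn_deriv = xn_has_derivative[OF t dP n]
  from DERIV_imp_deriv[OF xn_deriv] show ?thesis
    using xn_deriv rn_identity[OF t dP n] by simp
qed

end
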